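(* For $n>2$ and a fixed pair $i<j$ in $\{1,\dots,n\}$, the map $w^{\mathcal{P}}_{\{i,j\}}\colon G_{n,\mathcal{P}}^2\to F_n^2$ defined below is well defined, i.e. its value on a word does not change when the relations of $G_{n,\mathcal{P}}^2$ are applied to the word.
   Context: $G_{n,\mathcal{P}}^2$ has generators $a_{kl}^{\epsilon}$ ($\{k,l\}\subset\{1,\dots,n\}$, $\epsilon\in\{0,1\}$, with $a^\epsilon_{kl}=a^\epsilon_{lk}$) and relations $(a_{kl}^\epsilon)^2=1$; $a_{kl}^{\epsilon}a_{st}^{\epsilon'}=a_{st}^{\epsilon'}a_{kl}^{\epsilon}$ for $\{k,l\}\cap\{s,t\}=\emptyset$; $a_{kl}^{\epsilon_{kl}}a_{ks}^{\epsilon_{ks}}a_{ls}^{\epsilon_{ls}}=a_{ls}^{\epsilon_{ls}}a_{ks}^{\epsilon_{ks}}a_{kl}^{\epsilon_{kl}}$ for distinct $k,l,s$ with $\epsilon_{kl}+\epsilon_{ks}+\epsilon_{ls}\equiv0\pmod2$. Let $F_n^2$ be the group generated by all maps $\sigma\colon\{1,\dots,n\}\setminus\{i,j\}\to\mathbb{Z}_2$ subject only to the relations $\sigma^2=1$ (a free product of copies of $\mathbb{Z}_2$). For a word $\beta$ in the generators of $G_{n,\mathcal{P}}^2$, each occurrence $c=a_{ij}^{\epsilon}$ of a letter with index pair $\{i,j\}$, and each $k\in\{1,\dots,n\}\setminus\{i,j\}$, put $i^{\mathcal{P}}_c(k)=N^0_{ik}+N^0_{jk}\bmod 2$ if $\epsilon=0$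 and $i^{\mathcal{P}}_c(k)=N^0_{ik}+N^1_{jk}\bmod 2$ if $\epsilon=1$, where $N^{\delta}_{st}$ is the number of occurrences of $a^{\delta}_{st}$ in $\beta$ before $c$. If $c_1,\dots,c_m$ are the occurrences of letters $a_{ij}^{\epsilon}$ (any $\epsilon$) in $\beta$ in order, set $w^{\mathcal{P}}_{\{i,j\}}(\beta)=i^{\mathcal{P}}_{c_1}\cdots i^{\mathcal{P}}_{c_m}\in F_n^2$. *)

theory Defs
  imports Main
begin

text \<open>A letter a_{kl}^eps of G^2_{n,P} is encoded as the pair ({k,l}, eps), eps in {0,1};
  this makes a_{kl}^eps = a_{lk}^eps automatic.\<close>
type_synonym letter = "nat set \<times> nat"

definition valid_letter :: "nat \<Rightarrow> letter \<Rightarrow> bool" where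
  "valid_letter n c \<longleftrightarrow> fst c \<subseteq> {1..n} \<and> card (fst c) = 2 \<and> snd c \<le> 1"

inductive G_rel :: "nat \<Rightarrow> letter list \<Rightarrow> letter list \<Rightarrow> bool" for n where
  sq: "valid_letter n a \<Longrightarrow> G_rel n [a, a] []"
| comm: "\<lbrakk>k \<in> {1..n}; l \<in> {1..n}; s \<in> {1..n}; t \<in> {1..n}; k \<noteq> l; s \<noteq> t;
          {k,l} \<inter> {s,t} = {}; e \<le> 1; e' \<le> 1\<rbrakk>
        \<Longrightarrow> G_rel n [({k,l},e), ({s,t},e')] [({s,t},e'), ({k,l},e)]"
| tetra: "\<lbrakk>k \<in> {1..n}; l \<in> {1..n}; s \<in> {1..n}; k \<noteq> l; k \<noteq> s; l \<noteq> s;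
          e1 \<le> 1; e2 \<le> 1; e3 \<le> 1; even (e1 + e2 + e3)\<rbrakk>
        \<Longrightarrow> G_rel n [({k,l},e1), ({k,s},e2), ({l,s},e3)] [({l,s},e3), ({k,s},e2), ({k,l},e1)]"

definition G_step :: "nat \<Rightarrow> letter list \<Rightarrow> letter list \<Rightarrow> bool" where
  "G_step n x y \<longleftrightarrow> (\<exists>u v a b. G_rel n a b \<and> x = u @ a @ v \<and> y = u @ b @ v
      \<and> (\<forall>c \<in> set u \<union> set v. valid_letter n c))"

definition G_equiv :: "nat \<Rightarrow> letter list \<Rightarrow> letter list \<Rightarrow> bool" where
  "G_equiv n = equivclp (G_step n)"

text \<open>F_n^2: words in generators sigma (maps {1..n}-{i,j} \<rightarrow> Z_2, encoded as
  functions nat \<Rightarrow> bool that are False outside {1..n}-{i,j}), modulo sigma^2 = 1.\<close>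
inductive F_step :: "'g list \<Rightarrow> 'g list \<Rightarrow> bool" where
  "F_step (u @ [x, x] @ v) (u @ v)"

definition F_equiv :: "'g list \<Rightarrow> 'g list \<Rightarrow> bool" where
  "F_equiv = equivclp F_step"

definition Ncount :: "letter list \<Rightarrow> nat \<Rightarrow> nat \<Rightarrow> nat \<Rightarrow> nat" where
  "Ncount pre s t d = length (filter (\<lambda>c. c = ({s,t}, d)) pre)"

definition iP :: "nat \<Rightarrow> nat \<Rightarrow> nat \<Rightarrow> letter list \<Rightarrow> nat \<Rightarrow> nat \<Rightarrow> bool" where
  "iP n i j pre e = (\<lambda>k. if k \<in> {1..n} - {i,j} then
      (if e = 0 then odd (Ncount pre i k 0 + Ncount pre j k 0)
       else odd (Ncount pre i k 0 + Ncount pre j k 1))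
     else False)"

definition wP :: "nat \<Rightarrow> nat \<Rightarrow> nat \<Rightarrow> letter list \<Rightarrow> (nat \<Rightarrow> bool) list" where
  "wP n i j \<beta> = concat (map (\<lambda>p. if fst (\<beta> ! p) = {i,j}
        then [iP n i j (take p \<beta>) (snd (\<beta> ! p))] else []) [0..<length \<beta>])"

end

theory Submission
  imports Defs
begin

text \<open>Reading a word from left to right, each letter a_{ij}^e contributes a generator of F_n^2
  that depends only on the parities of the letter counts in the prefix before it. A defining
  relation of G_{n,P}^2 permutes letters or cancels a square, so the parities after the relator,
  and hence all later contributions, are unchanged. Inside the relator, a square a_{ij}^e a_{ij}^e
  contributes a cancelling pair x x; in a commutation the a_{ij}-letter only passes a letter
  with index pair disjoint from {i,j}, which does not affect it; and in
  a_{kl} a_{ks} a_{ls} = a_{ls} a_{ks} a_{kl} the letters preceding the a_{ij}-letter on the two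
  sides change its contribution at the third index by amounts differing by
  e_{kl} + e_{ks} + e_{ls}, which is even.\<close>

fun wP_after :: "nat \<Rightarrow> nat \<Rightarrow> nat \<Rightarrow> letter list \<Rightarrow> letter list \<Rightarrow> (nat \<Rightarrow> bool) list" where
  "wP_after n i j pre [] = []"
| "wP_after n i j pre (c # cs) =
     (if fst c = {i,j} then [iP n i j pre (snd c)] else []) @ wP_after n i j (pre @ [c]) cs"

lemma wP_after_append:
  "wP_after n i j pre (xs @ ys) = wP_after n i j pre xs @ wP_after n i j (pre @ xs) ys"
  by (induction xs arbitrary: pre) auto

lemma wP_eq_wP_after: "wP n i j \<beta> = wP_after n i j [] \<beta>"
proof (induction \<beta> rule: rev_induct)
  case Nil
  then show ?case by (simp add: wP_def)
next
  case (snoc c \<beta>)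
  have "wP n i j (\<beta> @ [c]) = wP n i j \<beta> @ (if fst c = {i,j} then [iP n i j \<beta> (snd c)] else [])"
    unfolding wP_def by (auto simp: nth_append intro!: arg_cong[where f = concat] map_cong)
  with snoc show ?case by (simp add: wP_after_append)
qed

definition same_letter_parity :: "'a list \<Rightarrow> 'a list \<Rightarrow> bool" where
  "same_letter_parity xs ys \<longleftrightarrow> (\<forall>x. even (count_list xs x) = even (count_list ys x))"

lemma same_letter_parity_append:
  "same_letter_parity xs ys \<Longrightarrow> same_letter_parity (u @ xs @ v) (u @ ys @ v)"
  unfolding same_letter_parity_def by simp

lemma Ncount_eq_count_list: "Ncount pre s t d = count_list pre ({s,t}, d)"
  unfolding Ncount_def count_list_eq_length_filter by metis

lemma iP_cong_same_letter_parity: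
  "same_letter_parity pre pre' \<Longrightarrow> iP n i j pre e = iP n i j pre' e"
  unfolding same_letter_parity_def iP_def Ncount_eq_count_list by simp

lemma wP_after_cong_same_letter_parity:
  "same_letter_parity pre pre' \<Longrightarrow> wP_after n i j pre cs = wP_after n i j pre' cs"
proof (induction cs arbitrary: pre pre')
  case Nil
  then show ?case by simp
next
  case (Cons c cs)
  have "same_letter_parity (pre @ [c]) (pre' @ [c])"
    using same_letter_parity_append[OF Cons.prems, of "[]" "[c]"] by simp
  with Cons show ?case by (simp add: iP_cong_same_letter_parity)
qed

lemma G_rel_same_letter_parity: "G_rel n a b \<Longrightarrow> same_letter_parity a b"
  unfolding same_letter_parity_def by (induction rule: G_rel.induct) auto

lemma iP_iff:
  assumes "e \<le> 1"
  shows "iP n i j pre e k \<longleftrightarrow>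
    k \<in> {1..n} - {i,j} \<and> odd (count_list pre ({i,k},0) + count_list pre ({j,k},e))"
  using assms unfolding iP_def Ncount_eq_count_list by (cases e) auto

lemma iP_append_cong:
  assumes "e \<le> 1"
    and "\<And>k. k \<notin> {i,j} \<Longrightarrow> even (count_list xs ({i,k},0) + count_list xs ({j,k},e))
                          = even (count_list ys ({i,k},0) + count_list ys ({j,k},e))"
  shows "iP n i j (u @ xs) e = iP n i j (u @ ys) e"
proof
  fix k
  show "iP n i j (u @ xs) e k = iP n i j (u @ ys) e k"
    using assms(2)[of k] unfolding iP_iff[OF assms(1)] by auto
qed

lemma iP_append_unrelated_letter:
  assumes "e \<le> 1" "i \<noteq> j" "{i,j} \<subseteq> A \<or> {i,j} \<inter> A = {}"
  shows "iP n i j (u @ [(A, d)]) e = iP n i j u e"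
proof -
  have "A \<noteq> {i,k} \<and> A \<noteq> {j,k}" if "k \<notin> {i,j}" for k
    using assms(2,3) that by blast
  then have "iP n i j (u @ [(A, d)]) e = iP n i j (u @ []) e"
    by (intro iP_append_cong[OF assms(1)]) simp
  then show ?thesis by simp
qed

lemma wP_after_tetrahedron:
  assumes "k \<noteq> l" "k \<noteq> s" "l \<noteq> s" "e1 \<le> 1" "e2 \<le> 1" "e3 \<le> 1" "even (e1 + e2 + e3)"
    and "i \<noteq> j"
  shows "wP_after n i j u [({k,l},e1), ({k,s},e2), ({l,s},e3)]
       = wP_after n i j u [({l,s},e3), ({k,s},e2), ({k,l},e1)]"
proof -
  have e: "e1 \<in> {0,1}" "e2 \<in> {0,1}" "e3 \<in> {0,1}" using assms by auto
  consider "{k,l} = {i,j}" | "{k,s} = {i,j}" | "{l,s} = {i,j}"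
    | "{k,l} \<noteq> {i,j}" "{k,s} \<noteq> {i,j}" "{l,s} \<noteq> {i,j}"
    by blast
  then show ?thesis
  proof cases
    case 1
    then have "k = i \<and> l = j \<or> k = j \<and> l = i" by (auto simp: doubleton_eq_iff)
    then have "iP n i j (u @ []) e1 = iP n i j (u @ [({l,s},e3), ({k,s},e2)]) e1"
      by (elim disjE; intro iP_append_cong; use assms e in \<open>auto simp: doubleton_eq_iff\<close>)
    with 1 assms show ?thesis by (auto simp: doubleton_eq_iff)
  next
    case 2
    then have "k = i \<and> s = j \<or> k = j \<and> s = i" by (auto simp: doubleton_eq_iff)
    then have "iP n i j (u @ [({k,l},e1)]) e2 = iP n i j (u @ [({l,s},e3)]) e2"
      by (elim disjE; intro iP_append_cong; use assms e in \<open>auto simp: doubleton_eq_iff\<close>)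
    with 2 assms show ?thesis by (auto simp: doubleton_eq_iff)
  next
    case 3
    then have "l = i \<and> s = j \<or> l = j \<and> s = i" by (auto simp: doubleton_eq_iff)
    then have "iP n i j (u @ [({k,l},e1), ({k,s},e2)]) e3 = iP n i j (u @ []) e3"
      by (elim disjE; intro iP_append_cong; use assms e in \<open>auto simp: doubleton_eq_iff\<close>)
    with 3 assms show ?thesis by (auto simp: doubleton_eq_iff)
  next
    case 4
    then show ?thesis by simp
  qed
qed

lemma wP_after_G_rel:
  assumes "G_rel n a b" "i \<noteq> j"
  shows "wP_after n i j u b = wP_after n i j u a \<or> (b = [] \<and> (\<exists>z. wP_after n i j u a = [z, z]))"
  using assms
proof (induction rule: G_rel.induct)
  case (sq c)
  obtain A e where c: "c = (A, e)" by force
  have "e \<le> 1" using sq.hyps by (simp add: c valid_letter_def)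
  then have "A = {i,j} \<Longrightarrow> iP n i j (u @ [c]) e = iP n i j u e"
    using iP_append_unrelated_letter \<open>i \<noteq> j\<close> by (simp add: c)
  then show ?case by (auto simp: c)
next
  case (comm k l s t e e')
  consider "{k,l} = {i,j}" | "{s,t} = {i,j}" | "{k,l} \<noteq> {i,j}" "{s,t} \<noteq> {i,j}"
    by blast
  then show ?case
  proof cases
    case 1
    with comm.hyps have "{i,j} \<inter> {s,t} = {}" "{s,t} \<noteq> {i,j}" by auto
    with comm.hyps \<open>i \<noteq> j\<close> have "iP n i j (u @ [({s,t},e')]) e = iP n i j u e"
      by (simp add: iP_append_unrelated_letter)
    with 1 \<open>{s,t} \<noteq> {i,j}\<close> show ?thesis by simp
  next
    case 2
    with comm.hyps have "{i,j} \<inter> {k,l} = {}" "{k,l} \<noteq> {i,j}" by auto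
    with comm.hyps \<open>i \<noteq> j\<close> have "iP n i j (u @ [({k,l},e)]) e' = iP n i j u e'"
      by (simp add: iP_append_unrelated_letter)
    with 2 \<open>{k,l} \<noteq> {i,j}\<close> show ?thesis by simp
  next
    case 3
    then show ?thesis by simp
  qed
next
  case (tetra k l s e1 e2 e3)
  have "wP_after n i j u [({k,l},e1), ({k,s},e2), ({l,s},e3)]
      = wP_after n i j u [({l,s},e3), ({k,s},e2), ({k,l},e1)]"
    by (rule wP_after_tetrahedron) (use tetra in auto)
  then show ?case by simp
qed

lemma F_equiv_wP_after_G_step:
  assumes "G_step n x y" "i \<noteq> j"
  shows "F_equiv (wP_after n i j [] x) (wP_after n i j [] y)"
proof -
  obtain p q a b where rel: "G_rel n a b" and x: "x = p @ a @ q" and y: "y = p @ b @ q"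
    using assms(1) unfolding G_step_def by blast
  have suffix: "wP_after n i j (p @ a) q = wP_after n i j (p @ b) q"
    using same_letter_parity_append[OF G_rel_same_letter_parity[OF rel], of p "[]"]
    by (intro wP_after_cong_same_letter_parity) simp
  let ?w = "\<lambda>r. wP_after n i j [] p @ r @ wP_after n i j (p @ b) q"
  have wx: "wP_after n i j [] x = ?w (wP_after n i j p a)"
    and wy: "wP_after n i j [] y = ?w (wP_after n i j p b)"
    by (simp_all add: x y wP_after_append suffix)
  from wP_after_G_rel[OF rel assms(2), of p] show ?thesis
  proof
    assume "wP_after n i j p b = wP_after n i j p a"
    then show ?thesis by (simp add: wx wy F_equiv_def)
  next
    assume "b = [] \<and> (\<exists>z. wP_after n i j p a = [z, z])"
    then obtain z where "wP_after n i j p a = [z, z]" "wP_after n i j p b = []" by auto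
    moreover have "F_step (?w [z, z]) (?w [])"
      using F_step.intros[of "wP_after n i j [] p" z "wP_after n i j (p @ b) q"] by simp
    ultimately show ?thesis
      unfolding wx wy F_equiv_def by (simp add: r_into_equivclp)
  qed
qed

lemma equivclp_map:
  assumes "\<And>x y. R x y \<Longrightarrow> equivclp S (f x) (f y)" and "equivclp R x y"
  shows "equivclp S (f x) (f y)"
  using assms(2)
proof (induction rule: equivclp_induct)
  case base
  show ?case by (simp add: equivclp_def)
next
  case (step y z)
  from \<open>R y z \<or> R z y\<close> have "equivclp S (f y) (f z)"
    using assms(1) by (metis equivclp_sym)
  with step.IH show ?case by (rule equivclp_trans)
qed

theorem mainTheorem9:
  fixes n i j :: nat and \<beta> \<beta>' :: "letter list"
  assumes "n > 2" and "1 \<le> i" and "i < j" and "j \<le> n"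
    and "G_equiv n \<beta> \<beta>'"
  shows "F_equiv (wP n i j \<beta>) (wP n i j \<beta>')"
proof -
  have "i \<noteq> j" using \<open>i < j\<close> by simp
  have "F_equiv (wP_after n i j [] \<beta>) (wP_after n i j [] \<beta>')"
    using F_equiv_wP_after_G_step[OF _ \<open>i \<noteq> j\<close>] \<open>G_equiv n \<beta> \<beta>'\<close>
    unfolding F_equiv_def G_equiv_def by (rule equivclp_map)
  then show ?thesis by (simp add: wP_eq_wP_after)
qed

end
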